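(* Let $A$ be an $n\times n$ matrix over $\mathbb{C}$ (or $\mathbb{R}$) such that $A^3\neq 0$. Then the following are equivalent: (i) $A\otimes A^3\otimes A^2=A^2\otimes A^3\otimes A$; (ii) $A^2\otimes A=A\otimes A^2$; (iii) $A^2=\mu A$ for some scalar $\mu$.
   Context: Here $\otimes$ denotes the Kronecker product of matrices: for matrices $A=[a_{ij}]$ and $B$, $A\otimes B$ is the block matrix whose $(i,j)$ block is $a_{ij}B$. *)

theory Defs
  imports "Jordan_Normal_Form.Matrix"
begin

text \<open>Kronecker product: the block matrix whose (i,j) block is a_ij B.
  Row index i * dim_row B + k of the result lies in block row i, local row k.\<close>
definition kron :: "'a :: times mat \<Rightarrow> 'a mat \<Rightarrow> 'a mat" (infixl \<open>\<otimes>\<^sub>K\<close> 70) where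
  "kron A B = mat (dim_row A * dim_row B) (dim_col A * dim_col B)
     (\<lambda>(i, j). A $$ (i div dim_row B, j div dim_col B) * B $$ (i mod dim_row B, j mod dim_col B))"

end

theory Submission
  imports Defs
begin

text \<open>Every entry of a Kronecker product is a product of one entry of each factor, so equations
  between Kronecker products are equations between such products. In
  \<open>A \<otimes> A\<^sup>3 \<otimes> A\<^sup>2 = A\<^sup>2 \<otimes> A\<^sup>3 \<otimes> A\<close> a nonzero entry of the middle factor \<open>A\<^sup>3\<close> can be cancelled,
  which leaves \<open>A\<^sup>2 \<otimes> A = A \<otimes> A\<^sup>2\<close>. That equation reads \<open>(A\<^sup>2)\<^sub>a\<^sub>b A\<^sub>c\<^sub>d = A\<^sub>a\<^sub>b (A\<^sup>2)\<^sub>c\<^sub>d\<close>;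
  fixing a nonzero entry \<open>A\<^sub>c\<^sub>d\<close> shows \<open>A\<^sup>2 = \<mu> A\<close> with \<open>\<mu> = (A\<^sup>2)\<^sub>c\<^sub>d / A\<^sub>c\<^sub>d\<close>. Conversely, a
  scalar factor can be moved freely between the factors of a Kronecker product.\<close>

lemma carrier_kron:
  "X \<in> carrier_mat p q \<Longrightarrow> Y \<in> carrier_mat r s \<Longrightarrow> X \<otimes>\<^sub>K Y \<in> carrier_mat (p * r) (q * s)"
  by (simp add: kron_def)

lemma index_block_lt:
  fixes a c p r :: nat
  assumes "a < p" "c < r"
  shows "a * r + c < p * r"
proof -
  have "a * r + c < Suc a * r" using assms by simp
  also have "\<dots> \<le> p * r" using assms by (intro mult_le_mono1) simp
  finally show ?thesis .
qed

lemma div_mod_less_of_less_mult: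
  fixes i p r :: nat
  assumes "i < p * r"
  shows "i div r < p" "i mod r < r"
proof -
  have "0 < r" using assms by (auto intro: gr0I)
  with assms show "i div r < p" "i mod r < r" by (simp_all add: less_mult_imp_div_less)
qed

lemma index_kron:
  assumes "X \<in> carrier_mat p q" "Y \<in> carrier_mat r s"
    and "a < p" "b < q" "c < r" "d < s"
  shows "(X \<otimes>\<^sub>K Y) $$ (a * r + c, b * s + d) = X $$ (a, b) * Y $$ (c, d)"
  using assms index_block_lt[of a p c r] index_block_lt[of b q d s] by (simp add: kron_def)

lemma kron_eq_kron_iff:
  assumes "X \<in> carrier_mat p q" "X' \<in> carrier_mat p q"
    and "Y \<in> carrier_mat r s" "Y' \<in> carrier_mat r s"
  shows "X \<otimes>\<^sub>K Y = X' \<otimes>\<^sub>K Y' \<longleftrightarrow>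
    (\<forall>a<p. \<forall>b<q. \<forall>c<r. \<forall>d<s. X $$ (a, b) * Y $$ (c, d) = X' $$ (a, b) * Y' $$ (c, d))"
    (is "_ \<longleftrightarrow> ?entries")
proof
  assume eq: "X \<otimes>\<^sub>K Y = X' \<otimes>\<^sub>K Y'"
  show ?entries
  proof (intro allI impI)
    fix a b c d
    assume "a < p" "b < q" "c < r" "d < s"
    from index_kron[OF assms(1,3) this] index_kron[OF assms(2,4) this] eq
    show "X $$ (a, b) * Y $$ (c, d) = X' $$ (a, b) * Y' $$ (c, d)" by simp
  qed
next
  assume entries: ?entries
  show "X \<otimes>\<^sub>K Y = X' \<otimes>\<^sub>K Y'"
  proof (rule eq_matI)
    fix i j
    assume "i < dim_row (X' \<otimes>\<^sub>K Y')" "j < dim_col (X' \<otimes>\<^sub>K Y')"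
    then have "i < p * r" "j < q * s" using assms by (simp_all add: kron_def)
    then have "i div r < p" "i mod r < r" "j div s < q" "j mod s < s"
      by (simp_all add: div_mod_less_of_less_mult)
    with \<open>i < p * r\<close> \<open>j < q * s\<close> show "(X \<otimes>\<^sub>K Y) $$ (i, j) = (X' \<otimes>\<^sub>K Y') $$ (i, j)"
      using assms entries by (simp add: kron_def)
  qed (use assms in \<open>simp_all add: kron_def\<close>)
qed

lemma kron_smult_left: "(\<alpha> \<cdot>\<^sub>m X) \<otimes>\<^sub>K Y = \<alpha> \<cdot>\<^sub>m (X \<otimes>\<^sub>K (Y :: 'a :: comm_semiring_1 mat))"
proof (rule eq_matI)
  fix i j
  assume ij: "i < dim_row (\<alpha> \<cdot>\<^sub>m (X \<otimes>\<^sub>K Y))" "j < dim_col (\<alpha> \<cdot>\<^sub>m (X \<otimes>\<^sub>K Y))"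
  then have "i div dim_row Y < dim_row X" "i mod dim_row Y < dim_row Y"
    "j div dim_col Y < dim_col X" "j mod dim_col Y < dim_col Y"
    by (simp_all add: kron_def div_mod_less_of_less_mult)
  with ij show "(\<alpha> \<cdot>\<^sub>m X \<otimes>\<^sub>K Y) $$ (i, j) = (\<alpha> \<cdot>\<^sub>m (X \<otimes>\<^sub>K Y)) $$ (i, j)"
    by (simp add: kron_def ac_simps)
qed (simp_all add: kron_def)

lemma kron_smult_right: "X \<otimes>\<^sub>K (\<alpha> \<cdot>\<^sub>m Y) = \<alpha> \<cdot>\<^sub>m (X \<otimes>\<^sub>K (Y :: 'a :: comm_semiring_1 mat))"
proof (rule eq_matI)
  fix i j
  assume ij: "i < dim_row (\<alpha> \<cdot>\<^sub>m (X \<otimes>\<^sub>K Y))" "j < dim_col (\<alpha> \<cdot>\<^sub>m (X \<otimes>\<^sub>K Y))"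
  then have "i div dim_row Y < dim_row X" "i mod dim_row Y < dim_row Y"
    "j div dim_col Y < dim_col X" "j mod dim_col Y < dim_col Y"
    by (simp_all add: kron_def div_mod_less_of_less_mult)
  with ij show "(X \<otimes>\<^sub>K (\<alpha> \<cdot>\<^sub>m Y)) $$ (i, j) = (\<alpha> \<cdot>\<^sub>m (X \<otimes>\<^sub>K Y)) $$ (i, j)"
    by (simp add: kron_def ac_simps)
qed (simp_all add: kron_def)

lemma kron_swap_scalar_multiple:
  fixes Y :: "'a :: comm_semiring_1 mat"
  assumes "X = \<mu> \<cdot>\<^sub>m Y"
  shows "X \<otimes>\<^sub>K Y = Y \<otimes>\<^sub>K X" and "X \<otimes>\<^sub>K Z \<otimes>\<^sub>K Y = Y \<otimes>\<^sub>K Z \<otimes>\<^sub>K X"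
  by (simp_all add: assms kron_smult_left kron_smult_right)

lemma obtain_nonzero_entry:
  assumes "Z \<in> carrier_mat r s" "Z \<noteq> 0\<^sub>m r s"
  obtains c d where "c < r" "d < s" "Z $$ (c, d) \<noteq> 0"
proof -
  have "\<exists>c<r. \<exists>d<s. Z $$ (c, d) \<noteq> 0"
  proof (rule ccontr)
    assume "\<not> ?thesis"
    then have "Z = 0\<^sub>m r s" using assms(1) by (intro eq_matI) auto
    with assms(2) show False by simp
  qed
  then show thesis using that by blast
qed

lemma kron_cancel_middle:
  fixes Z :: "'a :: idom mat"
  assumes X: "X \<in> carrier_mat p q" "X' \<in> carrier_mat p q"
    and Z: "Z \<in> carrier_mat r s" "Z \<noteq> 0\<^sub>m r s"
    and W: "W \<in> carrier_mat t u" "W' \<in> carrier_mat t u"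
    and eq: "X \<otimes>\<^sub>K Z \<otimes>\<^sub>K W = X' \<otimes>\<^sub>K Z \<otimes>\<^sub>K W'"
  shows "X \<otimes>\<^sub>K W = X' \<otimes>\<^sub>K W'"
proof -
  obtain c d where cd: "c < r" "d < s" "Z $$ (c, d) \<noteq> 0"
    using Z by (rule obtain_nonzero_entry)
  have "X $$ (a, b) * W $$ (e, f) = X' $$ (a, b) * W' $$ (e, f)"
    if "a < p" "b < q" "e < t" "f < u" for a b e f
  proof -
    have "(X \<otimes>\<^sub>K Z) $$ (a * r + c, b * s + d) * W $$ (e, f)
        = (X' \<otimes>\<^sub>K Z) $$ (a * r + c, b * s + d) * W' $$ (e, f)"
      using eq kron_eq_kron_iff[OF carrier_kron[OF X(1) Z(1)] carrier_kron[OF X(2) Z(1)] W]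
        that cd index_block_lt by blast
    then have "Z $$ (c, d) * (X $$ (a, b) * W $$ (e, f))
        = Z $$ (c, d) * (X' $$ (a, b) * W' $$ (e, f))"
      using index_kron[OF X(1) Z(1) that(1,2) cd(1,2)] index_kron[OF X(2) Z(1) that(1,2) cd(1,2)]
      by (simp add: ac_simps)
    then show ?thesis using cd(3) by simp
  qed
  then show ?thesis using kron_eq_kron_iff[OF X W] by blast
qed

lemma kron_commute_iff_scalar_multiple:
  fixes X Y :: "'a :: field mat"
  assumes "X \<in> carrier_mat m n" "Y \<in> carrier_mat m n" "Y \<noteq> 0\<^sub>m m n"
  shows "X \<otimes>\<^sub>K Y = Y \<otimes>\<^sub>K X \<longleftrightarrow> (\<exists>\<mu>. X = \<mu> \<cdot>\<^sub>m Y)"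
proof
  assume commute: "X \<otimes>\<^sub>K Y = Y \<otimes>\<^sub>K X"
  obtain c d where cd: "c < m" "d < n" "Y $$ (c, d) \<noteq> 0"
    using assms(2,3) by (rule obtain_nonzero_entry)
  have "X $$ (a, b) = (X $$ (c, d) / Y $$ (c, d)) * Y $$ (a, b)" if "a < m" "b < n" for a b
  proof -
    have "X $$ (a, b) * Y $$ (c, d) = Y $$ (a, b) * X $$ (c, d)"
      using commute kron_eq_kron_iff[OF assms(1,2) assms(2,1)] that cd by blast
    then show ?thesis using cd(3) by (simp add: field_simps)
  qed
  then have "X = (X $$ (c, d) / Y $$ (c, d)) \<cdot>\<^sub>m Y"
    using assms(1,2) by (intro eq_matI) auto
  then show "\<exists>\<mu>. X = \<mu> \<cdot>\<^sub>m Y" ..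
next
  assume "\<exists>\<mu>. X = \<mu> \<cdot>\<^sub>m Y"
  then show "X \<otimes>\<^sub>K Y = Y \<otimes>\<^sub>K X" using kron_swap_scalar_multiple(1) by blast
qed

theorem theorem2p3:
  fixes A :: "'a :: real_normed_field mat" and n :: nat
  assumes "A \<in> carrier_mat n n"
    and "A ^\<^sub>m 3 \<noteq> 0\<^sub>m n n"
  shows "(A \<otimes>\<^sub>K A ^\<^sub>m 3 \<otimes>\<^sub>K A ^\<^sub>m 2 = A ^\<^sub>m 2 \<otimes>\<^sub>K A ^\<^sub>m 3 \<otimes>\<^sub>K A
          \<longleftrightarrow> A ^\<^sub>m 2 \<otimes>\<^sub>K A = A \<otimes>\<^sub>K A ^\<^sub>m 2)
       \<and> (A ^\<^sub>m 2 \<otimes>\<^sub>K A = A \<otimes>\<^sub>K A ^\<^sub>m 2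
          \<longleftrightarrow> (\<exists>\<mu>. A ^\<^sub>m 2 = \<mu> \<cdot>\<^sub>m A))"
proof -
  have A2: "A ^\<^sub>m 2 \<in> carrier_mat n n" and A3: "A ^\<^sub>m 3 \<in> carrier_mat n n"
    using assms(1) by auto
  have "A \<noteq> 0\<^sub>m n n"
  proof
    assume "A = 0\<^sub>m n n"
    then have "A ^\<^sub>m 3 = 0\<^sub>m n n" by (simp add: numeral_3_eq_3)
    with assms(2) show False ..
  qed
  then have ii_iii: "A ^\<^sub>m 2 \<otimes>\<^sub>K A = A \<otimes>\<^sub>K A ^\<^sub>m 2 \<longleftrightarrow> (\<exists>\<mu>. A ^\<^sub>m 2 = \<mu> \<cdot>\<^sub>m A)"
    using kron_commute_iff_scalar_multiple[OF A2 assms(1)] by blast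
  have i_ii: "A ^\<^sub>m 2 \<otimes>\<^sub>K A = A \<otimes>\<^sub>K A ^\<^sub>m 2"
    if "A \<otimes>\<^sub>K A ^\<^sub>m 3 \<otimes>\<^sub>K A ^\<^sub>m 2 = A ^\<^sub>m 2 \<otimes>\<^sub>K A ^\<^sub>m 3 \<otimes>\<^sub>K A"
    using kron_cancel_middle[OF assms(1) A2 A3 assms(2) A2 assms(1) that] by (rule sym)
  have iii_i: "A \<otimes>\<^sub>K A ^\<^sub>m 3 \<otimes>\<^sub>K A ^\<^sub>m 2 = A ^\<^sub>m 2 \<otimes>\<^sub>K A ^\<^sub>m 3 \<otimes>\<^sub>K A"
    if "A ^\<^sub>m 2 = \<mu> \<cdot>\<^sub>m A" for \<mu>
    using kron_swap_scalar_multiple(2)[OF that] by (rule sym)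
  show ?thesis using ii_iii i_ii iii_i by blast
qed

end
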